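(* Let $f:\mathbb{R}\to\mathbb{R}$ be twice continuously differentiable, and let $u_L<u_U$ with $f''>0$ on $(u_L,u_U)$ or $f''<0$ on $(u_L,u_U)$. Let $x_1<x_2=x_3<x_4$, $u_1,\dots,u_4\in[u_L,u_U]$, and let $u_{23}$ be a value in the closed interval with endpoints $u_2,u_3$ satisfying $$(x_2-x_1)\,a(u_1,u_{23})+(x_4-x_2)\,a(u_{23},u_4)=(x_2-x_1)\,a(u_1,u_2)+(x_4-x_3)\,a(u_3,u_4).$$ If particles 2 and 3 are replaced by the single particle $(x_2,u_{23})$, then the total variation of the particle values does not increase: $|u_{23}-u_1|+|u_4-u_{23}|\le |u_2-u_1|+|u_3-u_2|+|u_4-u_3|$.
   Context: For $g:\mathbb{R}\to\mathbb{R}$ write $[g(u)]_{a}^{b}=g(b)-g(a)$. For $u_1\neq u_2$ the nonlinear average is $a(u_1,u_2)=\frac{[f'(u)u-f(u)]_{u_1}^{u_2}}{[f'(u)]_{u_1}^{u_2}}=\frac{\int_{u_1}^{u_2}f''(u)u\,\mathrm{d}u}{\int_{u_1}^{u_2}f''(u)\,\mathrm{d}u}$, and $a(u,u)=u$. The total variation of a particle sequence with values $v_1,\dots,v_n$ (ordered by position) is $\sum_i|v_{i+1}-v_i|$; this equals the total variation of the monotone-between-particles interpolant used in the method. *)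

theory Defs
  imports "HOL-Analysis.Analysis"
begin

definition nl_avg :: "(real \<Rightarrow> real) \<Rightarrow> real \<Rightarrow> real \<Rightarrow> real" where
  "nl_avg f u1 u2 =
     (if u1 = u2 then u1
      else ((deriv f u2 * u2 - f u2) - (deriv f u1 * u1 - f u1)) / (deriv f u2 - deriv f u1))"

end

theory Submission
  imports Defs
begin

text \<open>Only the position of the merged value matters: a value lying between \<open>u\<^sub>2\<close> and
  \<open>u\<^sub>3\<close> splits the jump \<open>\<bar>u\<^sub>3 - u\<^sub>2\<bar>\<close> exactly, and the triangle inequality through
  \<open>u\<^sub>2\<close> and \<open>u\<^sub>3\<close> bounds the two new jumps. The conservation condition and the
  convexity of \<open>f\<close> are what make such a \<open>u\<^sub>2\<^sub>3\<close> exist.\<close>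

lemma abs_diff_split_between:
  fixes b c m :: real
  assumes "m \<in> {min b c..max b c}"
  shows "\<bar>m - b\<bar> + \<bar>c - m\<bar> = \<bar>c - b\<bar>"
  using assms by (auto simp: abs_if)

lemma total_variation_merge_between_le:
  fixes a b c d m :: real
  assumes "m \<in> {min b c..max b c}"
  shows "\<bar>m - a\<bar> + \<bar>d - m\<bar> \<le> \<bar>b - a\<bar> + \<bar>c - b\<bar> + \<bar>d - c\<bar>"
proof -
  have "\<bar>m - a\<bar> + \<bar>d - m\<bar> \<le> (\<bar>b - a\<bar> + \<bar>m - b\<bar>) + (\<bar>c - m\<bar> + \<bar>d - c\<bar>)"
    by (intro add_mono) linarith+
  also have "\<dots> = \<bar>b - a\<bar> + \<bar>c - b\<bar> + \<bar>d - c\<bar>"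
    using abs_diff_split_between[OF assms] by simp
  finally show ?thesis .
qed

theorem corollary1:
  fixes f :: "real \<Rightarrow> real"
    and uL uU x1 x2 x3 x4 u1 u2 u3 u4 u23 :: real
  assumes f_diff: "\<And>x. f differentiable (at x)"
    and f'_diff: "\<And>x. deriv f differentiable (at x)"
    and f''_cont: "continuous_on UNIV (deriv (deriv f))"
    and ulu: "uL < uU"
    and convex: "(\<forall>u\<in>{uL<..<uU}. deriv (deriv f) u > 0) \<or> (\<forall>u\<in>{uL<..<uU}. deriv (deriv f) u < 0)"
    and x12: "x1 < x2" and x23: "x2 = x3" and x34: "x3 < x4"
    and u1: "u1 \<in> {uL..uU}" and u2: "u2 \<in> {uL..uU}"
    and u3: "u3 \<in> {uL..uU}" and u4: "u4 \<in> {uL..uU}"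
    and u23: "u23 \<in> {min u2 u3..max u2 u3}"
    and cons: "(x2 - x1) * nl_avg f u1 u23 + (x4 - x2) * nl_avg f u23 u4
             = (x2 - x1) * nl_avg f u1 u2 + (x4 - x3) * nl_avg f u3 u4"
  shows "\<bar>u23 - u1\<bar> + \<bar>u4 - u23\<bar> \<le> \<bar>u2 - u1\<bar> + \<bar>u3 - u2\<bar> + \<bar>u4 - u3\<bar>"
  using u23 by (rule total_variation_merge_between_le)

end
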